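(* If $G$ is an infinite, connected, locally finite graph with finite metric dimension, then $G$ does not contain an infinite family of metric rays whose vertex sets are pairwise disjoint.
   Context: $d$ denotes shortest-path distance in $G$. A vertex $x$ resolves $u,v$ if $d(u,x)\ne d(v,x)$; a set $S$ of vertices is a resolving set if every pair of distinct vertices is resolved by some vertex of $S$. The metric dimension $\beta(G)$ is the minimum cardinality of a resolving set if a finite one exists, and $\infty$ otherwise. A metric ray of $G$ with endpoint $u_0$ is an infinite subgraph $P$ whose vertices admit an ordering $u_0,u_1,u_2,\dots$ (all distinct) with $u_k$ adjacent to $u_{k+1}$ in $P$ and $d_G(u_0,u_k)=k$ for all $k\ge 0$. *)

theory Defs
  imports Main "HOL-Library.Extended_Nat"
begin

definition graph :: "'a set \<Rightarrow> ('a \<Rightarrow> 'a \<Rightarrow> bool) \<Rightarrow> bool" where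
  "graph V E \<longleftrightarrow> (\<forall>x y. E x y \<longrightarrow> x \<in> V \<and> y \<in> V) \<and> (\<forall>x y. E x y \<longrightarrow> E y x) \<and> (\<forall>x. \<not> E x x)"

inductive walk :: "('a \<Rightarrow> 'a \<Rightarrow> bool) \<Rightarrow> 'a \<Rightarrow> 'a \<Rightarrow> nat \<Rightarrow> bool" for E where
  walk_refl: "walk E x x 0"
| walk_step: "E x y \<Longrightarrow> walk E y z n \<Longrightarrow> walk E x z (Suc n)"

definition connected_graph :: "'a set \<Rightarrow> ('a \<Rightarrow> 'a \<Rightarrow> bool) \<Rightarrow> bool" where
  "connected_graph V E \<longleftrightarrow> (\<forall>x\<in>V. \<forall>y\<in>V. \<exists>n. walk E x y n)"

definition locally_finite :: "'a set \<Rightarrow> ('a \<Rightarrow> 'a \<Rightarrow> bool) \<Rightarrow> bool" where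
  "locally_finite V E \<longleftrightarrow> (\<forall>x\<in>V. finite {y. E x y})"

text \<open>Shortest-path distance (meaningful in a connected graph).\<close>
definition gdist :: "('a \<Rightarrow> 'a \<Rightarrow> bool) \<Rightarrow> 'a \<Rightarrow> 'a \<Rightarrow> nat" where
  "gdist E x y = (LEAST n. walk E x y n)"

definition resolves :: "('a \<Rightarrow> 'a \<Rightarrow> bool) \<Rightarrow> 'a \<Rightarrow> 'a \<Rightarrow> 'a \<Rightarrow> bool" where
  "resolves E x u v \<longleftrightarrow> gdist E u x \<noteq> gdist E v x"

definition resolving_set :: "'a set \<Rightarrow> ('a \<Rightarrow> 'a \<Rightarrow> bool) \<Rightarrow> 'a set \<Rightarrow> bool" where
  "resolving_set V E S \<longleftrightarrow> S \<subseteq> V \<and>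
     (\<forall>u\<in>V. \<forall>v\<in>V. u \<noteq> v \<longrightarrow> (\<exists>x\<in>S. resolves E x u v))"

definition metric_dim :: "'a set \<Rightarrow> ('a \<Rightarrow> 'a \<Rightarrow> bool) \<Rightarrow> enat" where
  "metric_dim V E =
     (if \<exists>S. finite S \<and> resolving_set V E S
      then enat (LEAST k. \<exists>S. finite S \<and> resolving_set V E S \<and> card S = k)
      else \<infinity>)"

definition metric_ray :: "'a set \<Rightarrow> ('a \<Rightarrow> 'a \<Rightarrow> bool) \<Rightarrow> (nat \<Rightarrow> 'a) \<Rightarrow> bool" where
  "metric_ray V E u \<longleftrightarrow> inj u \<and> range u \<subseteq> V \<and> (\<forall>k. E (u k) (u (Suc k))) \<and>
     (\<forall>k. gdist E (u 0) (u k) = k)"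

end

theory Submission
  imports Defs "HOL-Library.FuncSet"
begin

(* Fix a vertex s of a finite resolving set S and let D bound the distances between s and S.
   A vertex at distance r from s is determined by its distances to S, each of which lies in
   [r - D, r + D]; so every sphere around s has at most (2D + 1)^|S| vertices. A ray is an
   infinite set of vertices, hence leaves every (finite) ball around s, and along the ray the
   distance to s changes by at most one per step; so each ray meets every sphere whose radius
   exceeds the distance from s to its endpoint. Disjoint rays meet such a sphere in distinct
   vertices, so there are at most (2D + 1)^|S| of them. *)

lemma walk_append: "walk E x y n \<Longrightarrow> walk E y z m \<Longrightarrow> walk E x z (n + m)"
  by (induction rule: walk.induct) (auto intro: walk.intros)

lemma walk_gdist: "walk E x y n \<Longrightarrow> walk E x y (gdist E x y)"
  unfolding gdist_def by (rule LeastI)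

lemma gdist_le_walk: "walk E x y n \<Longrightarrow> gdist E x y \<le> n"
  unfolding gdist_def by (rule Least_le)

lemma connected_graph_walk_gdist:
  "connected_graph V E \<Longrightarrow> x \<in> V \<Longrightarrow> y \<in> V \<Longrightarrow> walk E x y (gdist E x y)"
  unfolding connected_graph_def by (meson walk_gdist)

lemma gdist_triangle:
  assumes "connected_graph V E" "x \<in> V" "y \<in> V" "z \<in> V"
  shows "gdist E x z \<le> gdist E x y + gdist E y z"
  using assms by (meson connected_graph_walk_gdist gdist_le_walk walk_append)

lemma gdist_adjacent_le:
  assumes "connected_graph V E" "E x y" "y \<in> V" "z \<in> V"
  shows "gdist E x z \<le> gdist E y z + 1"
  using assms by (metis Suc_eq_plus1 connected_graph_walk_gdist gdist_le_walk walk_step)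

lemma nat_seq_attains_value:
  fixes g :: "nat \<Rightarrow> nat"
  assumes "g 0 \<le> R" and "\<And>k. g (Suc k) \<le> g k + 1" and "R \<le> g m"
  shows "\<exists>k. g k = R"
proof -
  define k where "k = (LEAST k. R \<le> g k)"
  have k: "R \<le> g k"
    using assms(3) unfolding k_def by (rule LeastI)
  show ?thesis
  proof (cases k)
    case 0
    then show ?thesis using k assms(1) by auto
  next
    case (Suc j)
    then have "\<not> R \<le> g j"
      unfolding k_def by (metis lessI not_less_Least)
    then show ?thesis using Suc k assms(2)[of j] by (intro exI[of _ k]) auto
  qed
qed

lemma resolving_set_nonempty:
  assumes "resolving_set V E S" and "infinite V"
  shows "S \<noteq> {}"
proof -
  obtain x y where "x \<in> V" "y \<in> V" "x \<noteq> y"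
    using assms(2) by (metis finite.simps finite_insert insertCI subsetI finite_subset)
  then show ?thesis using assms(1) unfolding resolving_set_def by blast
qed

definition gsphere :: "'a set \<Rightarrow> ('a \<Rightarrow> 'a \<Rightarrow> bool) \<Rightarrow> 'a \<Rightarrow> nat \<Rightarrow> 'a set" where
  "gsphere V E s r = {v \<in> V. gdist E v s = r}"

lemma gsphere_card_le:
  assumes conn: "connected_graph V E" and fin: "finite S" and res: "resolving_set V E S"
    and "s \<in> S" and D: "\<And>x. x \<in> S \<Longrightarrow> gdist E s x \<le> D \<and> gdist E x s \<le> D"
  shows "finite (gsphere V E s r) \<and> card (gsphere V E s r) \<le> (2 * D + 1) ^ card S"
proof -
  have SV: "S \<subseteq> V" and "s \<in> V"
    using res \<open>s \<in> S\<close> unfolding resolving_set_def by auto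
  define box where "box = PiE S (\<lambda>_. {- int D..int D})"
  define shifted_dists where "shifted_dists v = restrict (\<lambda>x. int (gdist E v x) - int r) S" for v
  have img: "shifted_dists ` gsphere V E s r \<subseteq> box"
  proof
    fix f assume "f \<in> shifted_dists ` gsphere V E s r"
    then obtain v where v: "v \<in> V" "gdist E v s = r" and f: "f = shifted_dists v"
      unfolding gsphere_def by auto
    have "int (gdist E v x) - int r \<in> {- int D..int D}" if "x \<in> S" for x
    proof -
      have "gdist E v x \<le> gdist E v s + gdist E s x" "gdist E v s \<le> gdist E v x + gdist E x s"
        using gdist_triangle[OF conn] v(1) \<open>s \<in> V\<close> SV that by (auto simp del: atLeastAtMost_iff)
      then show ?thesis using D[OF that] v(2) by auto
    qed
    then show "f \<in> box" unfolding f box_def shifted_dists_def by auto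
  qed
  have inj: "inj_on shifted_dists (gsphere V E s r)"
  proof (rule inj_onI)
    fix v w assume "v \<in> gsphere V E s r" "w \<in> gsphere V E s r"
      and eq: "shifted_dists v = shifted_dists w"
    then have "v \<in> V" "w \<in> V" unfolding gsphere_def by auto
    moreover have "gdist E v x = gdist E w x" if "x \<in> S" for x
      using fun_cong[OF eq, of x] that unfolding shifted_dists_def by simp
    ultimately show "v = w"
      using res unfolding resolving_set_def resolves_def by blast
  qed
  have "finite box" "card box = (2 * D + 1) ^ card S"
    using fin by (simp_all add: box_def finite_PiE card_PiE nat_add_distrib nat_mult_distrib)
  have "finite (gsphere V E s r)"
    using finite_imageD[OF finite_subset[OF img \<open>finite box\<close>] inj] .
  moreover have "card (gsphere V E s r) \<le> card box"
    using card_image[OF inj] card_mono[OF \<open>finite box\<close> img] by simp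
  ultimately show ?thesis using \<open>card box = (2 * D + 1) ^ card S\<close> by simp
qed

lemma finite_resolving_set_gspheres_bounded:
  assumes "connected_graph V E" "finite S" "resolving_set V E S" "s \<in> S"
  obtains C where "\<And>r. finite (gsphere V E s r) \<and> card (gsphere V E s r) \<le> C"
proof
  define D where "D = Max (gdist E s ` S \<union> (\<lambda>x. gdist E x s) ` S)"
  have "gdist E s x \<le> D \<and> gdist E x s \<le> D" if "x \<in> S" for x
    unfolding D_def using that \<open>finite S\<close> by simp
  then show "finite (gsphere V E s r) \<and> card (gsphere V E s r) \<le> (2 * D + 1) ^ card S"
    for r by (rule gsphere_card_le[OF assms])
qed

lemma inj_seq_gdist_unbounded:
  fixes u :: "nat \<Rightarrow> 'a"
  assumes "\<And>r. finite (gsphere V E s r)" and "inj u" and "range u \<subseteq> V"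
  shows "\<exists>k. R \<le> gdist E (u k) s"
proof (rule ccontr)
  assume "\<not> ?thesis"
  then have "range u \<subseteq> (\<Union>r<R. gsphere V E s r)"
    using assms(3) by (auto simp: gsphere_def not_le)
  then have "finite (range u)"
    using assms(1) by (meson finite_UN_I finite_lessThan finite_subset)
  from finite_imageD[OF this \<open>inj u\<close>] show False by simp
qed

lemma inj_path_meets_gsphere:
  fixes u :: "nat \<Rightarrow> 'a"
  assumes "graph V E" "connected_graph V E" "s \<in> V"
    and "\<And>r. finite (gsphere V E s r)" and "inj u" and edge: "\<And>k. E (u k) (u (Suc k))"
    and "gdist E (u 0) s \<le> R"
  shows "range u \<inter> gsphere V E s R \<noteq> {}"
proof -
  have uV: "range u \<subseteq> V"
    using edge \<open>graph V E\<close> unfolding graph_def by blast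
  obtain m where "R \<le> gdist E (u m) s"
    using inj_seq_gdist_unbounded[OF assms(4) \<open>inj u\<close> uV] by blast
  moreover have "gdist E (u (Suc k)) s \<le> gdist E (u k) s + 1" for k
  proof -
    have "E (u (Suc k)) (u k)"
      using edge \<open>graph V E\<close> unfolding graph_def by blast
    moreover have "u k \<in> V" using uV by blast
    ultimately show ?thesis using gdist_adjacent_le[OF assms(2) _ _ \<open>s \<in> V\<close>] by simp
  qed
  ultimately obtain k where "gdist E (u k) s = R"
    using nat_seq_attains_value[of "\<lambda>k. gdist E (u k) s", OF \<open>gdist E (u 0) s \<le> R\<close>] by blast
  with uV show ?thesis unfolding gsphere_def by blast
qed

lemma card_le_if_disjoint_images_meet:
  assumes "finite A" and "\<And>u. u \<in> F \<Longrightarrow> f u \<inter> A \<noteq> {}"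
    and "\<And>u w. u \<in> F \<Longrightarrow> w \<in> F \<Longrightarrow> u \<noteq> w \<Longrightarrow> f u \<inter> f w = {}"
  shows "card F \<le> card A"
proof -
  define pick where "pick u = (SOME a. a \<in> f u \<inter> A)" for u
  have pick: "pick u \<in> f u \<inter> A" if "u \<in> F" for u
    unfolding pick_def using assms(2)[OF that] by (metis all_not_in_conv someI_ex)
  have "inj_on pick F"
  proof (rule inj_onI)
    fix u w assume "u \<in> F" "w \<in> F" "pick u = pick w"
    then have "f u \<inter> f w \<noteq> {}"
      using pick by (metis IntD1 IntI empty_iff)
    then show "u = w"
      using assms(3) \<open>u \<in> F\<close> \<open>w \<in> F\<close> by blast
  qed
  moreover have "pick ` F \<subseteq> A"
    using pick by blast
  ultimately show ?thesis
    using \<open>finite A\<close> by (rule card_inj_on_le)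
qed

theorem theorem2:
  fixes V :: "'a set" and E :: "'a \<Rightarrow> 'a \<Rightarrow> bool"
  assumes "graph V E"
    and "infinite V"
    and "connected_graph V E"
    and "locally_finite V E"
    and "metric_dim V E < \<infinity>"
  shows "\<not> (\<exists>F. infinite F \<and> (\<forall>u\<in>F. metric_ray V E u) \<and>
              (\<forall>u\<in>F. \<forall>w\<in>F. u \<noteq> w \<longrightarrow> range u \<inter> range w = {}))"
proof
  assume "\<exists>F. infinite F \<and> (\<forall>u\<in>F. metric_ray V E u) \<and>
              (\<forall>u\<in>F. \<forall>w\<in>F. u \<noteq> w \<longrightarrow> range u \<inter> range w = {})"
  then obtain F where "infinite F" and rays: "\<forall>u\<in>F. metric_ray V E u"
    and disjoint: "\<forall>u\<in>F. \<forall>w\<in>F. u \<noteq> w \<longrightarrow> range u \<inter> range w = {}" by blast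
  obtain S where "finite S" and res: "resolving_set V E S"
    using assms(5) unfolding metric_dim_def by (auto split: if_splits)
  then obtain s where "s \<in> S"
    using resolving_set_nonempty[OF res assms(2)] by blast
  with res have "s \<in> V" unfolding resolving_set_def by blast
  obtain C where sphere: "\<And>r. finite (gsphere V E s r) \<and> card (gsphere V E s r) \<le> C"
    using finite_resolving_set_gspheres_bounded[OF assms(3) \<open>finite S\<close> res \<open>s \<in> S\<close>] by blast
  obtain F' where "F' \<subseteq> F" "finite F'" "card F' = Suc C"
    using \<open>infinite F\<close> infinite_arbitrarily_large by blast
  define R where "R = Max ((\<lambda>u. gdist E (u 0) s) ` F')"
  have meets: "range u \<inter> gsphere V E s R \<noteq> {}" if "u \<in> F'" for u
  proof (rule inj_path_meets_gsphere[OF assms(1,3) \<open>s \<in> V\<close>])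
    show "finite (gsphere V E s r)" for r using sphere by blast
    show "inj u" "E (u k) (u (Suc k))" for k
      using rays \<open>F' \<subseteq> F\<close> that unfolding metric_ray_def by blast+
    show "gdist E (u 0) s \<le> R" unfolding R_def using \<open>finite F'\<close> that by simp
  qed
  have "card F' \<le> card (gsphere V E s R)"
  proof (rule card_le_if_disjoint_images_meet[where f = range, OF _ meets])
    show "finite (gsphere V E s R)" using sphere by blast
    show "range u \<inter> range w = {}" if "u \<in> F'" "w \<in> F'" "u \<noteq> w" for u w
      using disjoint \<open>F' \<subseteq> F\<close> that by blast
  qed
  moreover have "card (gsphere V E s R) \<le> C"
    using sphere by blast
  ultimately show False
    using \<open>card F' = Suc C\<close> by simp
qed

end
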